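(* Let $\alpha,\beta\in[0,1]$ with $\alpha+\beta=1$, let $0<\delta<1/24$, and let $\xi$ be a real number with $\inf_{n\in\mathbb{N}} n\|n\xi\|\geqslant\delta$. Let $p$ be a positive integer and put $q=\left[\frac{p^2}{\delta}\log\frac{p^2}{\delta}\right]+1$. Let $$K=\Big\{x\in\mathbb{N}:\ p<x\leqslant q,\ \|x\xi\|\leqslant\frac{\delta}{(x\log(x+1))^\beta}\Big\}.$$ Then $$\sum_{x\in K}\frac{1}{(x\log(x+1))^\alpha}\leqslant 2^6\big(1+\log(1/\delta)\big).$$
   Context: $\|t\|$ denotes the distance from $t$ to the nearest integer; $[\cdot]$ is the integer part; $\log$ is the natural logarithm. *)

theory Defs
  imports "HOL-Analysis.Analysis"
begin

definition dist_int :: "real \<Rightarrow> real" where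
  "dist_int t = (INF k\<in>(\<int>::real set). \<bar>t - k\<bar>)"

end

theory Submission
  imports Defs
begin

text \<open>
  Put \<open>F x = x log(x+1)\<close>, so that the summand is \<open>F(x)\<^sup>\<beta> / F(x)\<close>.
  For \<open>x < y\<close> in \<open>K\<close> the integer \<open>y - x\<close> satisfies \<open>\<parallel>(y-x)\<xi>\<parallel> \<le> 2\<delta>/F(x)\<^sup>\<beta>\<close>,
  so the hypothesis on \<open>\<xi>\<close> forces \<open>F(x)\<^sup>\<beta> \<le> 2(y - x)\<close>; likewise \<open>F(x)\<^sup>\<beta> \<le> x\<close>.
  Hence each summand is bounded by a constant times the increment of
  \<open>log log(x+1)\<close> up to the next element of \<open>K\<close>, and the sum telescopes to
  \<open>O(log log q - log log p) = O(1 + log(1/\<delta>))\<close>.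
\<close>

lemma ln_ge_one_minus_inverse: "0 < (t::real) \<Longrightarrow> 1 - 1/t \<le> ln t"
  using ln_le_minus_one[of "1/t"] by (simp add: ln_div)

lemma one_le_ln_3: "1 \<le> ln (3::real)"
  using ln_ge_iff[of 3 1] exp_le by simp

lemma dist_int_nonneg: "0 \<le> dist_int t"
  unfolding dist_int_def by (rule cINF_greatest) (auto intro: Ints_0)

lemma dist_int_le: "k \<in> \<int> \<Longrightarrow> dist_int t \<le> \<bar>t - k\<bar>"
  unfolding dist_int_def by (rule cINF_lower) (auto simp: bdd_below_def intro!: exI[of _ 0])

lemma dist_int_diff_le: "dist_int (a - b) \<le> dist_int a + dist_int b"
proof -
  have "dist_int (a - b) - \<bar>b - k2\<bar> \<le> dist_int a" if k2: "k2 \<in> \<int>" for k2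
  proof -
    have "dist_int (a - b) - \<bar>b - k2\<bar> \<le> \<bar>a - k1\<bar>" if k1: "k1 \<in> \<int>" for k1
    proof -
      have "dist_int (a - b) \<le> \<bar>(a - b) - (k1 - k2)\<bar>" using k1 k2 by (intro dist_int_le) auto
      thus ?thesis by linarith
    qed
    thus ?thesis unfolding dist_int_def[of a] by (intro cINF_greatest) (auto intro: Ints_0)
  qed
  hence "dist_int (a - b) - dist_int a \<le> \<bar>b - k2\<bar>" if "k2 \<in> \<int>" for k2
    using that by (smt (verit))
  hence "dist_int (a - b) - dist_int a \<le> dist_int b"
    unfolding dist_int_def[of b] by (intro cINF_greatest) (auto intro: Ints_0)
  thus ?thesis by linarith
qed

definition badly_approximable :: "real \<Rightarrow> real \<Rightarrow> bool" where
  "badly_approximable \<delta> \<xi> \<longleftrightarrow> (\<forall>n::nat\<ge>1. \<delta> \<le> real n * dist_int (real n * \<xi>))"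

lemma badly_approximableI_INF:
  assumes "(INF n\<in>{1::nat..}. real n * dist_int (real n * \<xi>)) \<ge> \<delta>"
  shows "badly_approximable \<delta> \<xi>"
  unfolding badly_approximable_def
proof (intro allI impI)
  fix n :: nat assume "n \<ge> 1"
  hence "(INF n\<in>{1::nat..}. real n * dist_int (real n * \<xi>)) \<le> real n * dist_int (real n * \<xi>)"
    by (intro cINF_lower) (auto simp: bdd_below_def intro!: exI[of _ 0] mult_nonneg_nonneg dist_int_nonneg)
  thus "\<delta> \<le> real n * dist_int (real n * \<xi>)" using assms by linarith
qed

lemma badly_approximable_le_index:
  assumes "badly_approximable \<delta> \<xi>" "0 < \<delta>" "0 < G" "x \<ge> 1"
    and "dist_int (real x * \<xi>) \<le> \<delta> / G"
  shows "G \<le> real x"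
proof -
  have "\<delta> \<le> real x * (\<delta> / G)"
    using assms(1,4,5) mult_left_mono[OF assms(5), of "real x"] by (auto simp: badly_approximable_def)
  thus ?thesis using assms(2,3) by (simp add: field_simps)
qed

lemma badly_approximable_le_gap:
  assumes "badly_approximable \<delta> \<xi>" "0 < \<delta>" "0 < G" "x < y"
    and "dist_int (real x * \<xi>) \<le> \<delta> / G" "dist_int (real y * \<xi>) \<le> \<delta> / G"
  shows "G \<le> 2 * (real y - real x)"
proof -
  have diff: "real (y - x) * \<xi> = real y * \<xi> - real x * \<xi>"
    using assms(4) by (simp add: of_nat_diff algebra_simps)
  have "dist_int (real (y - x) * \<xi>) \<le> \<delta> / G + \<delta> / G"
    using dist_int_diff_le[of "real y * \<xi>" "real x * \<xi>"] assms(5,6) unfolding diff by linarith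
  also have "\<dots> = \<delta> / (G / 2)" by simp
  finally have "dist_int (real (y - x) * \<xi>) \<le> \<delta> / (G / 2)" .
  hence "G / 2 \<le> real (y - x)"
    using assms(3,4) by (intro badly_approximable_le_index[OF assms(1,2)]) auto
  thus ?thesis using assms(4) by (simp add: of_nat_diff)
qed

text \<open>On \<open>[x, min(y, 2x)]\<close> the function \<open>log log(t+1)\<close> has derivative at least \<open>1/(6 x log(x+1))\<close>.\<close>
lemma ln_ln_increment_ge:
  fixes x y b :: real
  assumes x1: "1 \<le> x" and xy: "x < y" and b_gap: "b \<le> 2*(y-x)" and b_x: "b \<le> x"
  shows "b / (x * ln (x+1)) \<le> 12 * (ln (ln (y+1)) - ln (ln (x+1)))"
proof -
  define L where "L = ln (x+1)"
  have L0: "0 < L" using x1 by (simp add: L_def)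
  define z where "z = min y (2*x)"
  have xz: "x < z" using xy x1 by (simp add: z_def)
  have zy: "z \<le> y" "z \<le> 2*x" by (auto simp: z_def)
  have Lz0: "0 < ln (z+1)" using xz x1 by simp
  have Lz_le: "ln (z+1) \<le> 2 * L"
  proof -
    have "z + 1 \<le> (x+1)^2" using zy(2) x1 by (simp add: power2_eq_square algebra_simps) (smt (verit) mult_nonneg_nonneg)
    hence "ln (z+1) \<le> ln ((x+1)^2)" using xz x1 by simp
    thus ?thesis using x1 by (simp add: ln_realpow L_def)
  qed
  have d1: "(z-x)/(z+1) \<le> ln (z+1) - ln (x+1)"
    using ln_ge_one_minus_inverse[of "(z+1)/(x+1)"] xz x1 by (simp add: ln_div field_simps)
  have d2: "(ln (z+1) - ln (x+1)) / ln (z+1) \<le> ln (ln (z+1)) - ln (ln (x+1))"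
    using ln_ge_one_minus_inverse[of "ln (z+1)/ln (x+1)"] Lz0 L0 by (simp add: ln_div field_simps L_def)
  have "(z-x)/(6*x*L) \<le> (z-x)/((z+1)*(2*L))"
  proof (rule divide_left_mono)
    have "(z+1)*(2*L) \<le> (3*x)*(2*L)" using zy x1 L0 by (intro mult_right_mono) auto
    thus "(z+1)*(2*L) \<le> 6*x*L" by simp
  qed (use xz L0 Lz0 x1 in auto)
  also have "\<dots> \<le> ((z-x)/(z+1)) / ln (z+1)"
    using Lz_le xz Lz0 x1 L0 by (simp add: divide_left_mono mult_left_mono)
  also have "\<dots> \<le> (ln (z+1) - ln (x+1)) / ln (z+1)" using divide_right_mono[OF d1, of "ln (z+1)"] Lz0 by simp
  also have "\<dots> \<le> ln (ln (y+1)) - ln (ln (x+1))"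
  proof -
    have "ln (z+1) \<le> ln (y+1)" using zy xz x1 by simp
    hence "ln (ln (z+1)) \<le> ln (ln (y+1))" using Lz0 by simp
    thus ?thesis using d2 by linarith
  qed
  finally have key: "(z-x)/(6*x*L) \<le> ln (ln (y+1)) - ln (ln (x+1))" .
  have "b \<le> 2 * (z - x)" using b_gap b_x x1 by (auto simp: z_def min_def)
  hence "b / (x * L) \<le> 12 * ((z-x)/(6*x*L))" using x1 L0 by (simp add: field_simps)
  also have "\<dots> \<le> 12 * (ln (ln (y+1)) - ln (ln (x+1)))" using key by (rule mult_left_mono) simp
  finally have "b / (x * L) \<le> 12 * (ln (ln (y+1)) - ln (ln (x+1)))" .
  thus ?thesis unfolding L_def .
qed

lemma inverse_ln_weight_le_one:
  fixes x b :: real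
  assumes "2 \<le> x" "b \<le> x"
  shows "b / (x * ln (x+1)) \<le> 1"
proof -
  have "1 \<le> ln (x + 1)" using one_le_ln_3 ln_le_cancel_iff[of 3 "x+1"] assms(1) by linarith
  hence "b \<le> x * ln (x + 1)" using assms by (smt (verit) mult_le_cancel_left1)
  thus ?thesis using assms by (simp add: divide_le_eq)
qed

lemma sum_le_increment_bound:
  fixes w \<Phi> :: "nat \<Rightarrow> real" and c :: real
  assumes "finite S" "S \<noteq> {}"
    and w1: "\<And>x. x \<in> S \<Longrightarrow> w x \<le> 1"
    and w_incr: "\<And>x y. x \<in> S \<Longrightarrow> y \<in> S \<Longrightarrow> x < y \<Longrightarrow> w x \<le> c * (\<Phi> y - \<Phi> x)"
  shows "sum w S \<le> c * (\<Phi> (Max S) - \<Phi> (Min S)) + 1"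
  using assms
proof (induction S rule: finite_linorder_min_induct)
  case empty
  then show ?case by simp
next
  case (insert b A)
  show ?case
  proof (cases "A = {}")
    case True
    then show ?thesis using insert.prems(2)[of b] by simp
  next
    case False
    have IH: "sum w A \<le> c * (\<Phi> (Max A) - \<Phi> (Min A)) + 1"
      using insert False by auto
    have mA: "Min A \<in> A" and b_less: "b < Min A"
      using False insert.hyps by auto
    have "w b \<le> c * (\<Phi> (Min A) - \<Phi> b)"
      using insert.prems(3)[of b "Min A"] mA b_less by simp
    moreover have "sum w (insert b A) = w b + sum w A"
      using insert.hyps b_less mA by (subst sum.insert) auto
    moreover have "b \<le> Max A" using b_less Max_ge[OF insert.hyps(1) mA] by linarith
    hence "Max (insert b A) = Max A" "Min (insert b A) = b"
      using False insert.hyps(1) b_less by (auto simp: max_def min_def)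
    ultimately show ?thesis using IH by (simp add: algebra_simps)
  qed
qed

lemma ln_ln_range_le:
  fixes \<delta> :: real and p m M :: nat
  assumes "p > 0" "0 < \<delta>" "\<delta> < 1/24" "p < m" "m \<le> M"
    and "M \<le> nat \<lfloor>(real p ^ 2 / \<delta>) * ln (real p ^ 2 / \<delta>)\<rfloor> + 1"
  shows "ln (ln (real M + 1)) - ln (ln (real m + 1)) \<le> 3 + 2 * ln (1 / \<delta>)"
proof -
  define P t A where "P = real p" and "t = ln (1 / \<delta>)" and "A = P^2 / \<delta>"
  have P1: "1 \<le> P" using assms(1) by (simp add: P_def)
  have t0: "0 \<le> t" using assms(2,3) by (simp add: t_def)
  have "1 * 24 \<le> P^2 * (1/\<delta>)" using P1 assms(2,3) by (intro mult_mono) (auto simp: field_simps)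
  hence A24: "24 \<le> A" by (simp add: A_def)
  have lnA: "ln A = 2 * ln P + t" using P1 assms(2) by (simp add: A_def t_def ln_div ln_realpow)
  have "0 \<le> A * ln A" using A24 by simp
  hence "real (nat \<lfloor>A * ln A\<rfloor>) \<le> A * ln A" by linarith
  hence "real M \<le> A * ln A + 1"
    using assms(6) unfolding A_def P_def by linarith
  also have "A * ln A \<le> A * (A - 1)" using A24 ln_le_minus_one[of A] by (intro mult_left_mono) auto
  finally have "real M + 1 \<le> A^2" using A24 by (simp add: power2_eq_square algebra_simps)
  hence "ln (real M + 1) \<le> 2 * ln A" using A24 ln_mono[of "real M + 1" "A^2"] by (simp add: ln_realpow)
  hence R_le: "ln (real M + 1) \<le> 4 * ln P + 2 * t" using lnA by simp
  define Lm where "Lm = ln (real m + 1)"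
  have "ln 3 \<le> ln (P + 2)" "ln (P + 2) \<le> Lm" "ln P \<le> ln (P + 2)"
    using P1 assms(4) by (auto simp: Lm_def P_def)
  hence Lm1: "1 \<le> Lm" and lnP: "ln P \<le> Lm" using one_le_ln_3 by linarith+
  have R0: "0 < ln (real M + 1)" using assms(4,5) by simp
  have "ln (ln (real M + 1)) - ln Lm = ln (ln (real M + 1) / Lm)"
    using R0 Lm1 by (simp add: ln_div)
  also have "\<dots> \<le> ln (real M + 1) / Lm - 1" using R0 Lm1 by (intro ln_le_minus_one) simp
  also have "\<dots> \<le> 4 * (ln P / Lm) + 2 * (t / Lm) - 1"
    using R_le Lm1 divide_right_mono[OF R_le, of Lm] by (simp add: add_divide_distrib)
  also have "\<dots> \<le> 4 * 1 + 2 * t - 1"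
    using lnP Lm1 t0 by (intro diff_right_mono add_mono mult_left_mono) (auto simp: divide_le_eq mult_le_cancel_left1)
  finally show ?thesis by (simp add: Lm_def t_def)
qed

theorem corollary3:
  fixes \<alpha> \<beta> \<delta> \<xi> :: real and p :: nat
  assumes "0 \<le> \<alpha>" "\<alpha> \<le> 1" "0 \<le> \<beta>" "\<beta> \<le> 1" "\<alpha> + \<beta> = 1"
    and "0 < \<delta>" "\<delta> < 1/24"
    and "(INF n\<in>{1::nat..}. real n * dist_int (real n * \<xi>)) \<ge> \<delta>"
    and "p > 0"
  defines "q \<equiv> nat \<lfloor>(real p ^ 2 / \<delta>) * ln (real p ^ 2 / \<delta>)\<rfloor> + 1"
  defines "K \<equiv> {x::nat. x \<ge> 1 \<and> p < x \<and> x \<le> q \<and>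
      dist_int (real x * \<xi>) \<le> \<delta> / (real x * ln (real x + 1)) powr \<beta>}"
  shows "(\<Sum>x\<in>K. 1 / (real x * ln (real x + 1)) powr \<alpha>) \<le> 2^6 * (1 + ln (1 / \<delta>))"
proof -
  define F where "F x = real x * ln (real x + 1)" for x :: nat
  define \<Phi> where "\<Phi> x = ln (ln (real x + 1))" for x :: nat
  have bad: "badly_approximable \<delta> \<xi>" using assms(8) by (rule badly_approximableI_INF)
  have K: "2 \<le> x \<and> p < x \<and> x \<le> q \<and> dist_int (real x * \<xi>) \<le> \<delta> / F x powr \<beta> \<and> 0 < F x"
    if "x \<in> K" for x using that assms(9) by (auto simp: K_def F_def)
  have summand: "1 / F x powr \<alpha> = F x powr \<beta> / F x" if "x \<in> K" for x
  proof -
    have "\<alpha> = 1 - \<beta>" using assms(5) by simp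
    thus ?thesis using K[OF that] by (simp add: powr_diff)
  qed
  have "\<delta> / F y powr \<beta> \<le> \<delta> / F x powr \<beta>" if "x \<in> K" "y \<in> K" "x < y" for x y
    using K[OF that(1)] that(3) assms(3,6)
    by (intro divide_left_mono powr_mono2 mult_pos_pos) (auto simp: F_def intro!: mult_mono)
  hence gap: "F x powr \<beta> \<le> 2 * (real y - real x)" if "x \<in> K" "y \<in> K" "x < y" for x y
    using K[OF that(1)] K[OF that(2)] that assms(6)
    by (intro badly_approximable_le_gap[OF bad]) (auto intro: order.trans)
  have size: "F x powr \<beta> \<le> real x" if "x \<in> K" for x
    using K[OF that] assms(6) by (intro badly_approximable_le_index[OF bad]) auto
  have "finite K" by (rule finite_subset[of _ "{..q}"]) (auto simp: K_def)
  have "(\<Sum>x\<in>K. 1 / F x powr \<alpha>) \<le> 12 * (\<Phi> (Max K) - \<Phi> (Min K)) + 1" if "K \<noteq> {}"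
  proof (rule sum_le_increment_bound[OF \<open>finite K\<close> that])
    show "1 / F x powr \<alpha> \<le> 1" if "x \<in> K" for x
      using K[OF that] size[OF that] unfolding summand[OF that] unfolding F_def
      by (intro inverse_ln_weight_le_one) auto
    show "1 / F x powr \<alpha> \<le> 12 * (\<Phi> y - \<Phi> x)" if "x \<in> K" "y \<in> K" "x < y" for x y
      using K[OF that(1)] size[OF that(1)] gap[OF that] that(3) unfolding summand[OF that(1)] unfolding F_def \<Phi>_def
      by (intro ln_ln_increment_ge) auto
  qed
  moreover have "\<Phi> (Max K) - \<Phi> (Min K) \<le> 3 + 2 * ln (1 / \<delta>)" if "K \<noteq> {}"
  proof -
    have "Min K \<in> K" "Max K \<in> K" "Min K \<le> Max K" using \<open>finite K\<close> that by auto
    thus ?thesis unfolding \<Phi>_def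
      by (intro ln_ln_range_le[OF assms(9,6,7)]) (auto dest: K simp: q_def)
  qed
  moreover have "0 \<le> ln (1 / \<delta>)" using assms(6,7) by simp
  ultimately show ?thesis by (cases "K = {}") (auto simp: F_def)
qed

end
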